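(* Let $Y_1,Y_2,\ldots$ be i.i.d. Bernoulli$(1/2)$ and let $(Z^k)_k$ be generated by the bit-drop scheme described in the context, independently of $(Y_i)$. For $0\le k\le n$ let $L^a_n(k)$ be the length of a longest common subsequence of $Z^k$ and $Y_1\ldots Y_n$. Let $$E^n_4:=\bigcap_{k=\lceil 0.45n\rceil}^{n}\{L^a_n(k)\geq 0.65k\}.$$ Then $\lim_{n\to\infty}P(E^n_4)=1$.
   Context: Bit-drop scheme: let $V_1,V_2,\ldots$ be i.i.d. Bernoulli$(1/2)$ and let $T_3,T_4,\ldots$ be independent, independent of $(V_k)$, with $T_{k+1}$ uniform on $\{2,\ldots,k\}$. Set $Z^2:=V_1V_2$ and, given $Z^k=Z^k_1\ldots Z^k_k$, define $Z^{k+1}_j:=Z^k_j$ for $j<T_{k+1}$, $Z^{k+1}_{T_{k+1}}:=V_{k+1}$, $Z^{k+1}_j:=Z^k_{j-1}$ for $T_{k+1}<j\le k+1$. *)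

theory Defs
  imports "HOL-Probability.Probability" "HOL-Library.Sublist"
begin

text \<open>Bit-drop scheme. Indices are 1-based: V 1, V 2, ... and T 3, T 4, ...
  bitdrop V T k is the word Z^k (for k >= 2); the values for k = 0, 1 are
  irrelevant conventions.\<close>
fun bitdrop :: "(nat \<Rightarrow> 'b) \<Rightarrow> (nat \<Rightarrow> nat) \<Rightarrow> nat \<Rightarrow> 'b list" where
  "bitdrop V T 0 = []"
| "bitdrop V T (Suc 0) = [V 1]"
| "bitdrop V T (Suc (Suc 0)) = [V 1, V 2]"
| "bitdrop V T (Suc (Suc (Suc k))) =
     (let Z = bitdrop V T (Suc (Suc k)); t = T (Suc (Suc (Suc k)))
      in take (t - 1) Z @ [V (Suc (Suc (Suc k)))] @ drop (t - 1) Z)"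

definition lcs_len :: "'b list \<Rightarrow> 'b list \<Rightarrow> nat" where
  "lcs_len xs ys = Max {length w | w. subseq w xs \<and> subseq w ys}"

end

theory Submission
  imports Defs "HOL-Real_Asymp.Real_Asymp"
begin

text \<open>The word \<open>Z\<^sup>k\<close> is \<open>V\<^sub>1 \<dots> V\<^sub>k\<close> rearranged by a permutation that depends on
  \<open>T\<close> alone. That permutation is independent of \<open>V\<close> and \<open>Y\<close>, so conditionally on it
  \<open>Z\<^sup>k\<close> and \<open>Y\<^sub>1 \<dots> Y\<^sub>k\<close> are two independent uniform bit strings. Cut both strings into \<open>\<lfloor>k/6\<rfloor>\<close> blocks of length 6; the LCS
  is at least the sum of the blockwise LCS lengths, which are independent, lie in
  \<open>[0, 6]\<close> and have mean \<open>16302/4096 \<approx> 3.98 > 0.65 \<cdot> 6\<close> by exhaustive enumeration of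
  all pairs of 6-bit words. Hoeffding's inequality gives
  \<open>P(L(Z\<^sup>k, Y\<^sub>1 \<dots> Y\<^sub>k) < 0.65 k) \<le> exp (-k/120000)\<close> for \<open>k \<ge> 400\<close>. Since the LCS can
  only grow when \<open>Y\<close> is extended, a union bound over \<open>0.45 n \<le> k \<le> n\<close> yields
  \<open>P(E\<^sup>n\<^sub>4) \<ge> 1 - (n + 1) exp (-0.45 n/120000) \<longrightarrow> 1\<close>.\<close>

section \<open>Longest common subsequences\<close>

lemma finite_common_subseq_lengths: "finite {length w | w. subseq w xs \<and> subseq w ys}"
proof (rule finite_subset)
  show "{length w | w. subseq w xs \<and> subseq w ys} \<subseteq> length ` set (List.subseqs xs)"
    by auto
qed simp

lemma lcs_len_ge: "subseq w xs \<Longrightarrow> subseq w ys \<Longrightarrow> length w \<le> lcs_len xs ys"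
  unfolding lcs_len_def by (rule Max_ge[OF finite_common_subseq_lengths]) auto

lemma lcs_len_witness:
  obtains w where "subseq w xs" "subseq w ys" "length w = lcs_len xs ys"
proof -
  have "lcs_len xs ys \<in> {length w | w. subseq w xs \<and> subseq w ys}"
    unfolding lcs_len_def
    by (rule Max_in[OF finite_common_subseq_lengths]) (auto intro: exI[of _ "[]"])
  then show ?thesis using that by auto
qed

lemma lcs_len_le_length: "lcs_len xs ys \<le> length xs"
  by (metis lcs_len_witness list_emb_length)

lemma lcs_len_mono_right: "subseq ys ys' \<Longrightarrow> lcs_len xs ys \<le> lcs_len xs ys'"
  by (metis lcs_len_ge lcs_len_witness subseq_order.order_trans)

lemma lcs_len_map_upt_mono:
  assumes "k \<le> n"
  shows "lcs_len xs (map f [1..<k + 1]) \<le> lcs_len xs (map f [1..<n + 1])"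
proof -
  have "map f [1..<k + 1] = take k (map f [1..<n + 1])"
    using assms by (simp add: take_map del: upt_Suc)
  then show ?thesis
    by (metis lcs_len_mono_right prefix_imp_subseq take_is_prefix)
qed

lemma lcs_len_superadditive: "lcs_len xs ys + lcs_len xs' ys' \<le> lcs_len (xs @ xs') (ys @ ys')"
proof -
  obtain w where "subseq w xs" "subseq w ys" "length w = lcs_len xs ys"
    by (rule lcs_len_witness)
  moreover obtain w' where "subseq w' xs'" "subseq w' ys'" "length w' = lcs_len xs' ys'"
    by (rule lcs_len_witness)
  ultimately show ?thesis
    using lcs_len_ge[of "w @ w'" "xs @ xs'" "ys @ ys'"] by (simp add: list_emb_append_mono)
qed

lemma sum_lcs_len_blocks_le:
  "(\<Sum>i<m. lcs_len (take b (drop (b * i) xs)) (take b (drop (b * i) ys))) \<le> lcs_len xs ys"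
proof (induction m arbitrary: xs ys)
  case (Suc m)
  have "(\<Sum>i<Suc m. lcs_len (take b (drop (b * i) xs)) (take b (drop (b * i) ys)))
      = lcs_len (take b xs) (take b ys)
        + (\<Sum>i<m. lcs_len (take b (drop (b * i) (drop b xs))) (take b (drop (b * i) (drop b ys))))"
    by (subst sum.lessThan_Suc_shift) (simp add: add.commute)
  also have "\<dots> \<le> lcs_len (take b xs) (take b ys) + lcs_len (drop b xs) (drop b ys)"
    using Suc.IH[of "drop b xs" "drop b ys"] by (simp add: add.commute)
  also have "\<dots> \<le> lcs_len xs ys"
    using lcs_len_superadditive[of "take b xs" "take b ys" "drop b xs" "drop b ys"] by simp
  finally show ?case .
qed simp

lemma set_blocks_disjoint:
  assumes "distinct xs" "i \<noteq> i'"
  shows "set (take b (drop (b * i) xs)) \<inter> set (take b (drop (b * i') xs)) = {}"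
proof -
  have "set (take b (drop (b * i) xs)) \<inter> set (take b (drop (b * i') xs)) = {}" if "i < i'" for i i'
  proof -
    have "b + b * i \<le> b * i'"
      using mult_le_mono2[of "Suc i" i' b] that by simp
    then have "set (take b (drop (b * i) xs)) \<subseteq> set (take (b * i') xs)"
      by (metis take_drop set_drop_subset set_take_subset_set_take order_trans)
    moreover have "set (take b (drop (b * i') xs)) \<subseteq> set (drop (b * i') xs)"
      by (rule set_take_subset)
    ultimately show ?thesis
      using set_take_disj_set_drop_if_distinct[OF assms(1) order_refl] by blast
  qed
  with assms(2) show ?thesis
    by (metis Int_commute linorder_neqE_nat)
qed

section \<open>The LCS of two uniform 6-bit words\<close>

fun lcs_rec :: "'a list \<Rightarrow> 'a list \<Rightarrow> nat" where
  "lcs_rec [] ys = 0"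
| "lcs_rec (x # xs) [] = 0"
| "lcs_rec (x # xs) (y # ys) =
     (if x = y then Suc (lcs_rec xs ys) else max (lcs_rec xs (y # ys)) (lcs_rec (x # xs) ys))"

lemma lcs_rec_le_lcs_len: "lcs_rec xs ys \<le> lcs_len xs ys"
proof -
  have "\<exists>w. subseq w xs \<and> subseq w ys \<and> length w = lcs_rec xs ys"
  proof (induction xs ys rule: lcs_rec.induct)
    case (3 x xs y ys)
    then show ?case
      by (cases "x = y") (auto simp: max_def intro: list_emb_Cons)
  qed auto
  then show ?thesis by (metis lcs_len_ge)
qed

definition bit_words :: "nat \<Rightarrow> nat list set" where
  "bit_words n = {w. set w \<subseteq> {0, 1} \<and> length w = n}"

lemma finite_bit_words: "finite (bit_words n)"
  unfolding bit_words_def by (rule finite_lists_length_eq) simp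

lemma card_bit_words: "card (bit_words n) = 2 ^ n"
  unfolding bit_words_def by (simp add: card_lists_length_eq numeral_2_eq_2)

lemma bit_words_not_empty: "bit_words n \<noteq> {}"
  unfolding bit_words_def by (auto intro!: exI[of _ "replicate n 0"])

lemma Cons_in_bit_words_Suc: "x # w \<in> bit_words (Suc n) \<longleftrightarrow> x \<in> {0, 1} \<and> w \<in> bit_words n"
  unfolding bit_words_def by auto

lemma Nil_notin_bit_words_Suc: "[] \<notin> bit_words (Suc n)"
  unfolding bit_words_def by simp

lemma pmf_bit_words_Cons:
  "pmf (pmf_of_set (bit_words (Suc n))) (x # w)
   = pmf (pmf_of_set {0, 1}) x * pmf (pmf_of_set (bit_words n)) w"
  by (auto simp: finite_bit_words bit_words_not_empty card_bit_words Cons_in_bit_words_Suc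
      split: split_indicator)

lemma sum_bit_words_append:
  "(\<Sum>w\<in>bit_words (m + n). f w) = (\<Sum>u\<in>bit_words m. \<Sum>v\<in>bit_words n. f (u @ v))"
proof -
  have "bit_words (m + n) = (\<lambda>(u, v). u @ v) ` (bit_words m \<times> bit_words n)"
  proof (intro equalityI subsetI)
    fix w assume "w \<in> bit_words (m + n)"
    then have "(take m w, drop m w) \<in> bit_words m \<times> bit_words n"
      unfolding bit_words_def by (auto dest: in_set_takeD in_set_dropD)
    then show "w \<in> (\<lambda>(u, v). u @ v) ` (bit_words m \<times> bit_words n)"
      by (intro image_eqI[of _ _ "(take m w, drop m w)"]) auto
  next
    fix w assume "w \<in> (\<lambda>(u, v). u @ v) ` (bit_words m \<times> bit_words n)"
    then show "w \<in> bit_words (m + n)" unfolding bit_words_def by auto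
  qed
  moreover have "inj_on (\<lambda>(u, v). u @ v) (bit_words m \<times> bit_words n)"
    unfolding inj_on_def bit_words_def by simp
  ultimately have "(\<Sum>w\<in>bit_words (m + n). f w) = (\<Sum>(u, v)\<in>bit_words m \<times> bit_words n. f (u @ v))"
    by (simp add: sum.reindex case_prod_beta')
  then show ?thesis by (simp add: sum.cartesian_product)
qed

fun bit_word_list :: "nat \<Rightarrow> nat list list" where
  "bit_word_list 0 = [[]]"
| "bit_word_list (Suc n) = map (\<lambda>w. w @ [0]) (bit_word_list n) @ map (\<lambda>w. w @ [1]) (bit_word_list n)"

lemma set_bit_word_list: "set (bit_word_list n) = bit_words n"
proof (induction n)
  case (Suc n)
  have "bit_words (Suc n) = (\<lambda>w. w @ [0]) ` bit_words n \<union> (\<lambda>w. w @ [1]) ` bit_words n"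
  proof (intro equalityI subsetI)
    fix w assume w: "w \<in> bit_words (Suc n)"
    then have "w \<noteq> []" by (auto simp: bit_words_def)
    with w have "w = butlast w @ [last w]" "last w \<in> {0, 1}" "butlast w \<in> bit_words n"
      by (auto simp: bit_words_def dest: in_set_butlastD last_in_set)
    then show "w \<in> (\<lambda>w. w @ [0]) ` bit_words n \<union> (\<lambda>w. w @ [1]) ` bit_words n"
      by (metis UnI1 UnI2 image_eqI insert_iff singletonD)
  qed (auto simp: bit_words_def)
  then show ?case using Suc by simp
qed (auto simp: bit_words_def)

lemma distinct_bit_word_list: "distinct (bit_word_list n)"
  by (induction n) (auto simp: distinct_map inj_on_def)

text \<open>The column of the dynamic-programming table for LCS: the entries
  \<open>lcs_rec (drop i xs) ys\<close> for \<open>i = 0, \<dots>, length xs\<close>. Prepending a letter to \<open>ys\<close>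
  updates the column in linear time, so summing over all words \<open>ys\<close> shares the
  work on common suffixes.\<close>

fun lcs_column :: "'a list \<Rightarrow> 'a list \<Rightarrow> nat list" where
  "lcs_column [] ys = [0]"
| "lcs_column (x # xs) ys = lcs_rec (x # xs) ys # lcs_column xs ys"

fun lcs_column_Cons :: "'a list \<Rightarrow> 'a \<Rightarrow> nat list \<Rightarrow> nat list" where
  "lcs_column_Cons [] y c = [0]"
| "lcs_column_Cons (x # xs) y c =
     (let c' = lcs_column_Cons xs y (tl c)
      in (if x = y then Suc (hd (tl c)) else max (hd c') (hd c)) # c')"

fun lcs_column_total :: "nat list \<Rightarrow> nat list \<Rightarrow> nat \<Rightarrow> nat" where
  "lcs_column_total xs c 0 = hd c"
| "lcs_column_total xs c (Suc n) =
     lcs_column_total xs (lcs_column_Cons xs 0 c) n + lcs_column_total xs (lcs_column_Cons xs 1 c) n"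

lemma hd_lcs_column: "hd (lcs_column xs ys) = lcs_rec xs ys"
  by (cases xs) auto

lemma lcs_column_Cons_lcs_column: "lcs_column_Cons xs y (lcs_column xs ys) = lcs_column xs (y # ys)"
  by (induction xs) (simp_all add: Let_def hd_lcs_column)

lemma lcs_column_total_lcs_column:
  "lcs_column_total xs (lcs_column xs ys) n = (\<Sum>w\<leftarrow>bit_word_list n. lcs_rec xs (w @ ys))"
  by (induction n arbitrary: ys) (simp_all add: hd_lcs_column lcs_column_Cons_lcs_column comp_def)

lemma lcs_column_total_bit_word_list_6:
  "(\<Sum>xs\<leftarrow>bit_word_list 6. lcs_column_total xs (lcs_column xs []) 6) = 16302"
  by code_simp

lemma sum_lcs_len_bit_words_6: "16302 \<le> (\<Sum>u\<in>bit_words 6. \<Sum>v\<in>bit_words 6. lcs_len u v)"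
proof -
  have sum_list_eq: "(\<Sum>w\<leftarrow>bit_word_list n. f w) = (\<Sum>w\<in>bit_words n. f w)" for n and f :: "_ \<Rightarrow> nat"
    by (simp add: sum_list_distinct_conv_sum_set distinct_bit_word_list set_bit_word_list)
  have "(\<Sum>u\<in>bit_words 6. \<Sum>v\<in>bit_words 6. lcs_rec u v)
      = (\<Sum>u\<leftarrow>bit_word_list 6. lcs_column_total u (lcs_column u []) 6)"
    by (simp only: lcs_column_total_lcs_column sum_list_eq append_Nil2)
  also have "\<dots> = 16302"
    by (rule lcs_column_total_bit_word_list_6)
  finally have "(\<Sum>u\<in>bit_words 6. \<Sum>v\<in>bit_words 6. lcs_rec u v) = 16302" .
  moreover have "(\<Sum>u\<in>bit_words 6. \<Sum>v\<in>bit_words 6. lcs_rec u v)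
      \<le> (\<Sum>u\<in>bit_words 6. \<Sum>v\<in>bit_words 6. lcs_len u v)"
    by (intro sum_mono lcs_rec_le_lcs_len)
  ultimately show ?thesis by simp
qed

section \<open>Fair bits and Hoeffding's inequality\<close>

lemma Hoeffding_exponent_lcs_le:
  assumes k: "400 \<le> k"
  shows "exp (- 2 * (real (k div 6) * (16302 / 4096) - 0.65 * k)\<^sup>2 / (real (k div 6) * 6\<^sup>2))
    \<le> exp (- real k / 120000)"
proof -
  define m where "m = k div 6"
  define D where "D = m * (16302 / 4096) - 0.65 * k"
  have "6 * real m \<le> k" "k \<le> 6 * real m + 5" "0 < m"
    using k unfolding m_def by linarith+
  then have "k / 200 \<le> D"
    using k unfolding D_def by simp
  have "k / 120000 = 2 * (k / 200)\<^sup>2 / (6 * k)"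
    using k by (simp add: power2_eq_square)
  also have "\<dots> \<le> 2 * D\<^sup>2 / (6 * k)"
    using \<open>k / 200 \<le> D\<close> by (intro divide_right_mono mult_left_mono power_mono) auto
  also have "\<dots> \<le> 2 * D\<^sup>2 / (real m * 6\<^sup>2)"
    using \<open>6 * real m \<le> k\<close> \<open>0 < m\<close> by (intro divide_left_mono) auto
  finally show ?thesis unfolding D_def m_def by simp
qed

lemma measurable_map_list:
  assumes "\<And>j. j \<in> set js \<Longrightarrow> X j \<in> measurable N (count_space UNIV)"
  shows "(\<lambda>\<omega>. map (\<lambda>j. X j \<omega> :: 'b :: countable) js) \<in> measurable N (count_space UNIV)"
  using assms
proof (induction js)
  case (Cons j js)
  have "(\<lambda>\<omega>. (X j \<omega>, map (\<lambda>j. X j \<omega>) js)) \<in> measurable N (count_space UNIV \<Otimes>\<^sub>M count_space UNIV)"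
    using Cons by (intro measurable_Pair) auto
  moreover have "(\<lambda>(x, xs). x # xs :: 'b list)
      \<in> measurable (count_space UNIV \<Otimes>\<^sub>M count_space UNIV) (count_space UNIV)"
    by (simp add: pair_measure_countable)
  ultimately show ?case by (simp add: measurable_compose[where f = "\<lambda>\<omega>. (_ \<omega>, _ \<omega>)"])
qed simp

context prob_space
begin

lemma indep_vars_lists:
  fixes X :: "'i \<Rightarrow> 'a \<Rightarrow> 'b :: countable"
  assumes indep: "indep_vars (\<lambda>_. count_space UNIV) X I"
    and "\<And>l. l \<in> L \<Longrightarrow> set (js l) \<subseteq> I" "disjoint_family_on (\<lambda>l. set (js l)) L"
  shows "indep_vars (\<lambda>_. count_space UNIV) (\<lambda>l \<omega>. map (\<lambda>j. X j \<omega>) (js l)) L"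
proof -
  have "indep_vars (\<lambda>l. \<Pi>\<^sub>M j\<in>set (js l). count_space UNIV)
      (\<lambda>l \<omega>. restrict (\<lambda>j. X j \<omega>) (set (js l))) L"
    by (rule indep_vars_restrict[OF indep]) (use assms in auto)
  then have "indep_vars (\<lambda>_. count_space UNIV)
      (\<lambda>l \<omega>. map (restrict (\<lambda>j. X j \<omega>) (set (js l))) (js l)) L"
    by (rule indep_vars_compose2[where Y = "\<lambda>l f. map f (js l)"])
       (auto intro!: measurable_map_list measurable_component_singleton)
  moreover have "map (restrict (\<lambda>j. X j \<omega>) (set (js l))) (js l) = map (\<lambda>j. X j \<omega>) (js l)" for l \<omega>
    by simp
  ultimately show ?thesis by simp
qed

lemma indep_var_lists:
  fixes X :: "'i \<Rightarrow> 'a \<Rightarrow> 'b :: countable"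
  assumes "indep_vars (\<lambda>_. count_space UNIV) X I"
    and "set as \<subseteq> I" "set bs \<subseteq> I" "set as \<inter> set bs = {}"
  shows "indep_var (count_space UNIV) (\<lambda>\<omega>. map (\<lambda>j. X j \<omega>) as)
    (count_space UNIV) (\<lambda>\<omega>. map (\<lambda>j. X j \<omega>) bs)"
proof -
  have "indep_vars (\<lambda>_. count_space UNIV) (\<lambda>l \<omega>. map (\<lambda>j. X j \<omega>) (case_bool as bs l)) UNIV"
    by (rule indep_vars_lists) (use assms in \<open>auto simp: disjoint_family_on_def split: bool.split\<close>)
  moreover have "(\<lambda>l \<omega>. map (\<lambda>j. X j \<omega>) (case_bool as bs l))
      = case_bool (\<lambda>\<omega>. map (\<lambda>j. X j \<omega>) as) (\<lambda>\<omega>. map (\<lambda>j. X j \<omega>) bs)"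
    by (simp add: fun_eq_iff split: bool.split)
  moreover have "(\<lambda>_. count_space UNIV) = case_bool (count_space UNIV) (count_space UNIV)"
    by (simp add: fun_eq_iff split: bool.split)
  ultimately show ?thesis unfolding indep_var_def by metis
qed

lemma indep_var_prob_Int:
  assumes "indep_var (count_space UNIV) S (count_space UNIV) W"
  shows "prob {\<omega> \<in> space M. S \<omega> \<in> A \<and> W \<omega> \<in> B}
    = prob {\<omega> \<in> space M. S \<omega> \<in> A} * prob {\<omega> \<in> space M. W \<omega> \<in> B}"
proof -
  have "S -` A \<inter> space M \<in> sigma_sets (space M) {S -` A \<inter> space M | A. A \<in> sets (count_space UNIV)}"
    "W -` B \<inter> space M \<in> sigma_sets (space M) {W -` B \<inter> space M | B. B \<in> sets (count_space UNIV)}"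
    by auto
  with assms have "prob ((S -` A \<inter> space M) \<inter> (W -` B \<inter> space M))
      = prob (S -` A \<inter> space M) * prob (W -` B \<inter> space M)"
    unfolding indep_var_eq indep_sets2_eq by blast
  moreover have "{\<omega> \<in> space M. S \<omega> \<in> A \<and> W \<omega> \<in> B} = (S -` A \<inter> space M) \<inter> (W -` B \<inter> space M)"
    by auto
  ultimately show ?thesis by (simp add: vimage_def Int_def conj_commute)
qed

lemma prob_fair_bit:
  assumes "random_variable (count_space UNIV) B"
    and "distr M (count_space UNIV) B = measure_pmf (pmf_of_set {0, 1})"
  shows "prob {\<omega> \<in> space M. B \<omega> = x} = pmf (pmf_of_set {0, 1}) x"
proof -
  have "prob {\<omega> \<in> space M. B \<omega> = x} = measure (distr M (count_space UNIV) B) {x}"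
    using assms(1) by (subst measure_distr) (auto simp: vimage_def Int_def conj_commute)
  then show ?thesis using assms(2) by (simp add: measure_pmf_single)
qed

lemma prob_fair_bits:
  fixes X :: "'i \<Rightarrow> 'a \<Rightarrow> nat"
  assumes indep: "indep_vars (\<lambda>_. count_space UNIV) X I"
    and "distinct js" "set js \<subseteq> I"
    and fair: "\<And>j. j \<in> set js \<Longrightarrow> distr M (count_space UNIV) (X j) = measure_pmf (pmf_of_set {0, 1})"
  shows "prob {\<omega> \<in> space M. map (\<lambda>j. X j \<omega>) js = w} = pmf (pmf_of_set (bit_words (length js))) w"
  using assms(2-4)
proof (induction js arbitrary: w)
  case Nil
  have "bit_words 0 = {[]}" by (auto simp: bit_words_def)
  then show ?case by (cases w) (simp_all add: prob_space)
next
  case (Cons j js)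
  show ?case
  proof (cases w)
    case Nil
    then show ?thesis by (simp add: Nil_notin_bit_words_Suc finite_bit_words bit_words_not_empty)
  next
    case (Cons x w')
    have rv: "random_variable (count_space UNIV) (X j)"
      using indep Cons.prems(2) unfolding indep_vars_def by auto
    have "indep_var (count_space UNIV) (\<lambda>\<omega>. map (\<lambda>j. X j \<omega>) [j])
        (count_space UNIV) (\<lambda>\<omega>. map (\<lambda>j. X j \<omega>) js)"
      by (rule indep_var_lists[OF indep]) (use Cons.prems in auto)
    from indep_var_prob_Int[OF this, of "{[x]}" "{w'}"]
    have "prob {\<omega> \<in> space M. map (\<lambda>j. X j \<omega>) (j # js) = w}
        = prob {\<omega> \<in> space M. X j \<omega> = x} * prob {\<omega> \<in> space M. map (\<lambda>j. X j \<omega>) js = w'}"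
      by (simp add: Cons)
    also have "\<dots> = pmf (pmf_of_set (bit_words (length (j # js)))) w"
      using Cons.IH Cons.prems prob_fair_bit[OF rv] by (simp add: Cons pmf_bit_words_Cons)
    finally show ?thesis .
  qed
qed

lemma distr_fair_bits:
  fixes X :: "'i \<Rightarrow> 'a \<Rightarrow> nat"
  assumes indep: "indep_vars (\<lambda>_. count_space UNIV) X I"
    and "distinct js" "set js \<subseteq> I"
    and "\<And>j. j \<in> set js \<Longrightarrow> distr M (count_space UNIV) (X j) = measure_pmf (pmf_of_set {0, 1})"
  shows "distr M (count_space UNIV) (\<lambda>\<omega>. map (\<lambda>j. X j \<omega>) js)
    = measure_pmf (pmf_of_set (bit_words (length js)))"
proof (rule measure_eqI_countable)
  have "random_variable (count_space UNIV) (\<lambda>\<omega>. map (\<lambda>j. X j \<omega>) js)"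
    using indep assms(3) unfolding indep_vars_def by (intro measurable_map_list) auto
  then show "emeasure (distr M (count_space UNIV) (\<lambda>\<omega>. map (\<lambda>j. X j \<omega>) js)) {w}
      = emeasure (measure_pmf (pmf_of_set (bit_words (length js)))) {w}" for w
    using prob_fair_bits[OF assms, of w]
    by (simp add: emeasure_distr emeasure_eq_measure emeasure_pmf_single vimage_def Int_def conj_commute)
qed auto

lemma expectation_lcs_len_fair_bits_6:
  fixes X :: "'i \<Rightarrow> 'a \<Rightarrow> nat"
  assumes indep: "indep_vars (\<lambda>_. count_space UNIV) X I"
    and "distinct (as @ bs)" "set (as @ bs) \<subseteq> I" "length as = 6" "length bs = 6"
    and "\<And>j. j \<in> set (as @ bs) \<Longrightarrow> distr M (count_space UNIV) (X j) = measure_pmf (pmf_of_set {0, 1})"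
  shows "16302 / 4096 \<le> expectation (\<lambda>\<omega>. real (lcs_len (map (\<lambda>j. X j \<omega>) as) (map (\<lambda>j. X j \<omega>) bs)))"
proof -
  define g where "g w = real (lcs_len (take 6 w) (drop 6 w))" for w :: "nat list"
  have rv: "random_variable (count_space UNIV) (\<lambda>\<omega>. map (\<lambda>j. X j \<omega>) (as @ bs))"
    using indep assms(3) unfolding indep_vars_def by (intro measurable_map_list) auto
  have "16302 / 4096 \<le> (\<Sum>u\<in>bit_words 6. \<Sum>v\<in>bit_words 6. real (lcs_len u v)) / 2 ^ 12"
    using sum_lcs_len_bit_words_6 by (simp add: of_nat_sum[symmetric] del: of_nat_sum)
  also have "\<dots> = (\<Sum>w\<in>bit_words (6 + 6). g w) / card (bit_words 12)"
    unfolding sum_bit_words_append card_bit_words g_def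
    by (intro arg_cong2[where f = "(/)"] sum.cong refl) (simp_all add: bit_words_def)
  also have "\<dots> = measure_pmf.expectation (pmf_of_set (bit_words (length (as @ bs)))) g"
    using assms(4,5) by (simp add: integral_pmf_of_set finite_bit_words bit_words_not_empty)
  also have "\<dots> = integral\<^sup>L (distr M (count_space UNIV) (\<lambda>\<omega>. map (\<lambda>j. X j \<omega>) (as @ bs))) g"
    by (simp only: distr_fair_bits[OF assms(1-3,6)])
  also have "\<dots> = expectation (\<lambda>\<omega>. g (map (\<lambda>j. X j \<omega>) (as @ bs)))"
    by (rule integral_distr[OF rv]) simp
  also have "\<dots> = expectation (\<lambda>\<omega>. real (lcs_len (map (\<lambda>j. X j \<omega>) as) (map (\<lambda>j. X j \<omega>) bs)))"
    using assms(4) by (simp add: g_def)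
  finally show ?thesis .
qed

lemma prob_sum_less_Hoeffding:
  fixes X :: "nat \<Rightarrow> 'a \<Rightarrow> real"
  assumes "indep_vars (\<lambda>_. borel) X {..<m}"
    and "\<And>i \<omega>. i < m \<Longrightarrow> X i \<omega> \<in> {0..c}"
    and "\<And>i. i < m \<Longrightarrow> e \<le> expectation (X i)"
    and "t \<le> m * e" "0 < m" "0 < c"
  shows "prob {\<omega> \<in> space M. (\<Sum>i<m. X i \<omega>) < t} \<le> exp (- 2 * (m * e - t)\<^sup>2 / (m * c\<^sup>2))"
proof -
  define \<mu> where "\<mu> = (\<Sum>i<m. expectation (X i))"
  interpret Hoeffding_ineq M "{..<m}" X "\<lambda>_. 0" "\<lambda>_. c" \<mu>
    by unfold_locales (use assms(1,2) \<mu>_def in auto)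
  have "m * e \<le> \<mu>"
    using sum_mono[of "{..<m}" "\<lambda>_. e" "\<lambda>i. expectation (X i)"] assms(3) by (simp add: \<mu>_def)
  have "prob {\<omega> \<in> space M. (\<Sum>i<m. X i \<omega>) < t} \<le> prob {\<omega> \<in> space M. (\<Sum>i<m. X i \<omega>) \<le> \<mu> - (\<mu> - t)}"
    by (intro finite_measure_mono) auto
  also have "\<dots> \<le> exp (- 2 * (\<mu> - t)\<^sup>2 / (\<Sum>i<m. (c - 0)\<^sup>2))"
    using \<open>m * e \<le> \<mu>\<close> assms(4-6) by (intro Hoeffding_ineq_le) auto
  also have "\<dots> \<le> exp (- 2 * (m * e - t)\<^sup>2 / (m * c\<^sup>2))"
  proof -
    have "(m * e - t)\<^sup>2 \<le> (\<mu> - t)\<^sup>2"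
      using \<open>m * e \<le> \<mu>\<close> assms(4) by (intro power_mono) auto
    then show ?thesis
      using assms(5,6) by (simp add: divide_right_mono)
  qed
  finally show ?thesis .
qed

lemma prob_less_mono:
  fixes f g :: "'a \<Rightarrow> real"
  assumes "g \<in> borel_measurable M" and "\<And>\<omega>. \<omega> \<in> space M \<Longrightarrow> g \<omega> \<le> f \<omega>"
  shows "prob {\<omega> \<in> space M. f \<omega> < c} \<le> prob {\<omega> \<in> space M. g \<omega> < c}"
  using assms by (intro finite_measure_mono) (auto intro: le_less_trans)

lemma indep_vars_lcs_len_blocks:
  fixes X :: "'i \<Rightarrow> 'a \<Rightarrow> 'b :: countable"
  assumes indep: "indep_vars (\<lambda>_. count_space UNIV) X I"
    and dist: "distinct (ps @ qs)" and sub: "set (ps @ qs) \<subseteq> I"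
  shows "indep_vars (\<lambda>_. borel) (\<lambda>i \<omega>. real (lcs_len
      (map (\<lambda>j. X j \<omega>) (take b (drop (b * i) ps))) (map (\<lambda>j. X j \<omega>) (take b (drop (b * i) qs))))) UNIV"
proof -
  define blk where "blk xs i = take b (drop (b * i) xs)" for xs :: "'i list" and i
  have set_blk: "set (blk xs i) \<subseteq> set xs" for xs i
    unfolding blk_def by (meson order_trans set_drop_subset set_take_subset)
  have "disjoint_family (\<lambda>i. set (blk ps i @ blk qs i))"
    using dist set_blk set_blocks_disjoint[of ps] set_blocks_disjoint[of qs]
    unfolding disjoint_family_on_def blk_def by auto (blast+)
  moreover have "set (blk ps i @ blk qs i) \<subseteq> I" for i
    using sub set_blk[of ps i] set_blk[of qs i] by auto
  ultimately have "indep_vars (\<lambda>_. count_space UNIV)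
      (\<lambda>i \<omega>. map (\<lambda>j. X j \<omega>) (blk ps i @ blk qs i)) UNIV"
    by (intro indep_vars_lists[OF indep])
  then have "indep_vars (\<lambda>_. borel) (\<lambda>i \<omega>. (\<lambda>w. real (lcs_len (take (length (blk ps i)) w)
      (drop (length (blk ps i)) w))) (map (\<lambda>j. X j \<omega>) (blk ps i @ blk qs i))) UNIV"
    by (rule indep_vars_compose2) simp
  then have "indep_vars (\<lambda>_. borel)
      (\<lambda>i \<omega>. real (lcs_len (map (\<lambda>j. X j \<omega>) (blk ps i)) (map (\<lambda>j. X j \<omega>) (blk qs i)))) UNIV"
    by (simp add: take_map drop_map)
  then show ?thesis
    by (simp add: blk_def)
qed

lemma prob_lcs_len_fair_bits_lt:
  fixes X :: "'i \<Rightarrow> 'a \<Rightarrow> nat"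
  assumes indep: "indep_vars (\<lambda>_. count_space UNIV) X I"
    and dist: "distinct (ps @ qs)" and sub: "set (ps @ qs) \<subseteq> I"
    and len: "length ps = k" "length qs = k"
    and fair: "\<And>j. j \<in> set (ps @ qs) \<Longrightarrow>
      distr M (count_space UNIV) (X j) = measure_pmf (pmf_of_set {0, 1})"
    and k: "400 \<le> k"
  shows "prob {\<omega> \<in> space M.
      real (lcs_len (map (\<lambda>j. X j \<omega>) ps) (map (\<lambda>j. X j \<omega>) qs)) < 0.65 * k}
    \<le> exp (- real k / 120000)"
proof -
  define m where "m = k div 6"
  define blk where "blk xs i = take 6 (drop (6 * i) xs)" for xs :: "'i list" and i
  define Xb where "Xb i \<omega> = real (lcs_len (map (\<lambda>j. X j \<omega>) (blk ps i)) (map (\<lambda>j. X j \<omega>) (blk qs i)))"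
    for i \<omega>
  have "indep_vars (\<lambda>_. borel) Xb UNIV"
    using indep_vars_lcs_len_blocks[OF indep dist sub, of 6] by (simp add: Xb_def[abs_def] blk_def)
  then have indep_Xb: "indep_vars (\<lambda>_. borel) Xb {..<m}"
    by (rule indep_vars_subset) simp
  have length_blk: "length (blk ps i) = 6" "length (blk qs i) = 6" if "i < m" for i
    using that len unfolding blk_def m_def by auto
  then have Xb_range: "Xb i \<omega> \<in> {0..6}" if "i < m" for i \<omega>
    using lcs_len_le_length[of "map (\<lambda>j. X j \<omega>) (blk ps i)"] that by (simp add: Xb_def)
  have expectation_Xb: "16302 / 4096 \<le> expectation (Xb i)" if "i < m" for i
  proof -
    have "set (blk xs i) \<subseteq> set xs" for xs :: "'i list"
      unfolding blk_def by (meson order_trans set_drop_subset set_take_subset)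
    then have blk_in: "set (blk ps i) \<subseteq> set ps" "set (blk qs i) \<subseteq> set qs" by this+
    moreover have "distinct (blk ps i @ blk qs i)"
      using dist blk_in unfolding blk_def by auto
    ultimately show ?thesis
      unfolding Xb_def using sub fair length_blk[OF that]
      by (intro expectation_lcs_len_fair_bits_6[OF indep]) auto
  qed
  have "(\<Sum>i<m. Xb i \<omega>) \<le> real (lcs_len (map (\<lambda>j. X j \<omega>) ps) (map (\<lambda>j. X j \<omega>) qs))" for \<omega>
    using sum_lcs_len_blocks_le[where m = m and b = 6 and xs = "map (\<lambda>j. X j \<omega>) ps" and ys = "map (\<lambda>j. X j \<omega>) qs"]
    unfolding Xb_def blk_def of_nat_sum[symmetric] of_nat_le_iff by (simp add: take_map drop_map)
  moreover have "(\<lambda>\<omega>. \<Sum>i<m. Xb i \<omega>) \<in> borel_measurable M"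
    using indep_Xb unfolding indep_vars_def by (intro borel_measurable_sum) auto
  ultimately have "prob {\<omega> \<in> space M.
      real (lcs_len (map (\<lambda>j. X j \<omega>) ps) (map (\<lambda>j. X j \<omega>) qs)) < 0.65 * k}
    \<le> prob {\<omega> \<in> space M. (\<Sum>i<m. Xb i \<omega>) < 0.65 * k}"
    by (intro prob_less_mono)
  also have "\<dots> \<le> exp (- 2 * (m * (16302 / 4096) - 0.65 * k)\<^sup>2 / (real m * 6\<^sup>2))"
    using k by (intro prob_sum_less_Hoeffding indep_Xb Xb_range expectation_Xb) (auto simp: m_def)
  also have "\<dots> \<le> exp (- real k / 120000)"
    unfolding m_def using k by (rule Hoeffding_exponent_lcs_le)
  finally show ?thesis .
qed

lemma prob_indep_var_mixture_le:
  assumes indep: "indep_var (count_space UNIV) S (count_space UNIV) W"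
    and "finite F" and S_in: "\<And>\<omega>. \<omega> \<in> space M \<Longrightarrow> S \<omega> \<in> F"
    and bound: "\<And>s. s \<in> F \<Longrightarrow> prob {\<omega> \<in> space M. P s (W \<omega>)} \<le> \<beta>"
  shows "prob {\<omega> \<in> space M. P (S \<omega>) (W \<omega>)} \<le> \<beta>"
proof -
  have rv: "random_variable (count_space UNIV) S" "random_variable (count_space UNIV) W"
    using indep by (auto dest: indep_var_rv1 indep_var_rv2)
  define A where "A s = {\<omega> \<in> space M. S \<omega> \<in> {s} \<and> W \<omega> \<in> {w. P s w}}" for s
  have events_A: "A s \<in> events" for s
  proof -
    have "A s = (S -` {s} \<inter> space M) \<inter> (W -` {w. P s w} \<inter> space M)"
      by (auto simp: A_def)
    then show ?thesis
      by (simp only:) (intro sets.Int measurable_sets[OF rv(1)] measurable_sets[OF rv(2)]; simp)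
  qed
  have "{\<omega> \<in> space M. P (S \<omega>) (W \<omega>)} = (\<Union>s\<in>F. A s)"
    using S_in by (auto simp: A_def)
  then have "prob {\<omega> \<in> space M. P (S \<omega>) (W \<omega>)} \<le> (\<Sum>s\<in>F. prob (A s))"
    using events_A \<open>finite F\<close> by (auto intro: finite_measure_subadditive_finite)
  also have "\<dots> = (\<Sum>s\<in>F. prob {\<omega> \<in> space M. S \<omega> = s} * prob {\<omega> \<in> space M. P s (W \<omega>)})"
    using indep_var_prob_Int[OF indep, of "{_}" "{w. P _ w}"] by (simp add: A_def)
  also have "\<dots> \<le> (\<Sum>s\<in>F. prob {\<omega> \<in> space M. S \<omega> = s} * \<beta>)"
    by (intro sum_mono mult_left_mono bound) auto
  also have "\<dots> = prob (\<Union>s\<in>F. {\<omega> \<in> space M. S \<omega> = s}) * \<beta>"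
    using rv \<open>finite F\<close>
    by (subst finite_measure_finite_Union) (auto simp: sum_distrib_right disjoint_family_on_def)
  also have "(\<Union>s\<in>F. {\<omega> \<in> space M. S \<omega> = s}) = space M"
    using S_in by auto
  finally show ?thesis by (simp add: prob_space)
qed

lemma prob_Ball_ge:
  fixes \<beta> :: real
  assumes "finite K"
    and events: "\<And>k. k \<in> K \<Longrightarrow> {\<omega> \<in> space M. \<not> Q k \<omega>} \<in> events"
    and bound: "\<And>k. k \<in> K \<Longrightarrow> prob {\<omega> \<in> space M. \<not> Q k \<omega>} \<le> \<beta>"
  shows "1 - card K * \<beta> \<le> prob {\<omega> \<in> space M. \<forall>k\<in>K. Q k \<omega>}"
proof -
  let ?B = "\<Union>k\<in>K. {\<omega> \<in> space M. \<not> Q k \<omega>}"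
  have "?B \<in> events"
    using events \<open>finite K\<close> by auto
  have "{\<omega> \<in> space M. \<forall>k\<in>K. Q k \<omega>} = space M - ?B"
    by auto
  then have "prob {\<omega> \<in> space M. \<forall>k\<in>K. Q k \<omega>} = 1 - prob ?B"
    using prob_compl[OF \<open>?B \<in> events\<close>] by simp
  moreover have "prob ?B \<le> (\<Sum>k\<in>K. prob {\<omega> \<in> space M. \<not> Q k \<omega>})"
    using events \<open>finite K\<close> by (auto intro: finite_measure_subadditive_finite)
  moreover have "(\<Sum>k\<in>K. prob {\<omega> \<in> space M. \<not> Q k \<omega>}) \<le> card K * \<beta>"
    using sum_mono[OF bound] by simp
  ultimately show ?thesis by simp
qed

end

section \<open>The bit-drop scheme\<close>

lemma bitdrop_map: "bitdrop V T k = map V (bitdrop id T k)"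
  by (induction V T k rule: bitdrop.induct) (simp_all add: Let_def take_map drop_map)

lemma bitdrop_id_permutations_of_set: "bitdrop id T k \<in> permutations_of_set {1..k}"
proof -
  have "mset (bitdrop id T k) = mset [1..<k + 1]"
  proof (induction "id :: nat \<Rightarrow> nat" T k rule: bitdrop.induct)
    case (4 T k)
    let ?Z = "bitdrop id T (Suc (Suc k))" and ?t = "T (Suc (Suc (Suc k))) - 1"
    have "mset (take ?t ?Z @ [Suc (Suc (Suc k))] @ drop ?t ?Z) = add_mset (Suc (Suc (Suc k))) (mset ?Z)"
      by (metis mset_append add_mset_add_single append_take_drop_id union_commute union_assoc mset.simps)
    with 4 show ?case by (simp add: Let_def)
  qed (simp_all add: numeral_2_eq_2)
  then show ?thesis
    by (metis permutations_of_setI distinct_upt mset_eq_imp_distinct_iff set_mset_mset set_upt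
        atLeastLessThanSuc_atLeastAtMost Suc_eq_plus1)
qed

lemma bitdrop_cong:
  "(\<And>j. 3 \<le> j \<Longrightarrow> j \<le> k \<Longrightarrow> T j = T' j) \<Longrightarrow> bitdrop V T k = bitdrop V T' k"
  by (induction V T k rule: bitdrop.induct) (simp_all add: Let_def)

lemma measurable_bitdrop:
  fixes V :: "nat \<Rightarrow> 'a \<Rightarrow> 'b :: countable"
  assumes V: "\<And>j. 1 \<le> j \<Longrightarrow> V j \<in> measurable M (count_space UNIV)"
    and T: "\<And>j. 3 \<le> j \<Longrightarrow> T j \<in> measurable M (count_space UNIV)"
  shows "(\<lambda>\<omega>. bitdrop (\<lambda>j. V j \<omega>) (\<lambda>j. T j \<omega>) k) \<in> measurable M (count_space UNIV)"
proof (induction k rule: less_induct)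
  case (less k)
  have "k < 3 \<or> (\<exists>k'. k = Suc (Suc (Suc k')))"
    by presburger
  then consider "k < 3" | k' where "k = Suc (Suc (Suc k'))"
    by blast
  then show ?case
  proof cases
    case 1
    then have "bitdrop (\<lambda>j. V j \<omega>) (\<lambda>j. T j \<omega>) k = map (\<lambda>j. V j \<omega>) [1..<k + 1]" for \<omega>
      by (auto simp: numeral_3_eq_3 numeral_2_eq_2 less_Suc_eq)
    moreover have "(\<lambda>\<omega>. map (\<lambda>j. V j \<omega>) [1..<k + 1]) \<in> measurable M (count_space UNIV)"
      using V by (intro measurable_map_list) auto
    ultimately show ?thesis by simp
  next
    case 2
    have [measurable]: "V (Suc (Suc (Suc k'))) \<in> measurable M (count_space UNIV)"
      "T (Suc (Suc (Suc k'))) \<in> measurable M (count_space UNIV)"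
      "(\<lambda>\<omega>. bitdrop (\<lambda>j. V j \<omega>) (\<lambda>j. T j \<omega>) (Suc (Suc k'))) \<in> measurable M (count_space UNIV)"
      using V T less 2 by auto
    show ?thesis
      unfolding 2 bitdrop.simps(4) Let_def by measurable
  qed
qed

context prob_space
begin

lemma indep_var_bitdrop_id:
  fixes V T Y :: "nat \<Rightarrow> 'a \<Rightarrow> nat"
  assumes indep: "indep_vars (\<lambda>_. count_space UNIV)
      (\<lambda>j. case j of Inl k \<Rightarrow> V k | Inr (Inl k) \<Rightarrow> T k | Inr (Inr i) \<Rightarrow> Y i)
      (Inl ` {1..} \<union> Inr ` Inl ` {3..} \<union> Inr ` Inr ` {1..})"
  shows "indep_var (count_space UNIV) (\<lambda>\<omega>. bitdrop id (\<lambda>j. T j \<omega>) k)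
    (count_space UNIV) (\<lambda>\<omega>. map (\<lambda>j. V j \<omega>) [1..<k + 1] @ map (\<lambda>i. Y i \<omega>) [1..<k + 1])"
proof -
  define X :: "nat + nat + nat \<Rightarrow> 'a \<Rightarrow> nat" where
    "X j = (case j of Inl k \<Rightarrow> V k | Inr (Inl k) \<Rightarrow> T k | Inr (Inr i) \<Rightarrow> Y i)" for j
  define perm where "perm t = bitdrop id (\<lambda>j. t ! (j - 3)) k" for t :: "nat list"
  have "indep_var (count_space UNIV) (perm \<circ> (\<lambda>\<omega>. map (\<lambda>j. X j \<omega>) (map (Inr \<circ> Inl) [3..<k + 1])))
      (count_space UNIV) (id \<circ> (\<lambda>\<omega>. map (\<lambda>j. X j \<omega>) (map Inl [1..<k + 1] @ map (Inr \<circ> Inr) [1..<k + 1])))"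
    using indep unfolding X_def[abs_def] by (intro indep_var_compose[OF indep_var_lists]) auto
  moreover have "perm (map (\<lambda>j. X j \<omega>) (map (Inr \<circ> Inl) [3..<k + 1])) = bitdrop id (\<lambda>j. T j \<omega>) k" for \<omega>
    unfolding perm_def by (rule bitdrop_cong) (simp add: X_def del: upt_Suc)
  ultimately show ?thesis
    by (simp add: comp_def X_def)
qed

lemma prob_lcs_len_bitdrop_lt:
  fixes V T Y :: "nat \<Rightarrow> 'a \<Rightarrow> nat"
  assumes distr_V: "\<And>k. k \<ge> 1 \<Longrightarrow>
      distr M (count_space UNIV) (V k) = measure_pmf (pmf_of_set {0, 1})"
    and distr_Y: "\<And>i. i \<ge> 1 \<Longrightarrow>
      distr M (count_space UNIV) (Y i) = measure_pmf (pmf_of_set {0, 1})"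
    and indep: "indep_vars (\<lambda>_. count_space UNIV)
      (\<lambda>j. case j of Inl k \<Rightarrow> V k | Inr (Inl k) \<Rightarrow> T k | Inr (Inr i) \<Rightarrow> Y i)
      (Inl ` {1..} \<union> Inr ` Inl ` {3..} \<union> Inr ` Inr ` {1..})"
    and k: "400 \<le> k"
  shows "prob {\<omega> \<in> space M. real (lcs_len (bitdrop (\<lambda>j. V j \<omega>) (\<lambda>j. T j \<omega>) k)
      (map (\<lambda>i. Y i \<omega>) [1..<k + 1])) < 0.65 * k} \<le> exp (- real k / 120000)"
proof -
  define W where "W \<omega> = map (\<lambda>j. V j \<omega>) [1..<k + 1] @ map (\<lambda>i. Y i \<omega>) [1..<k + 1]" for \<omega>
  define P where "P \<pi> w \<longleftrightarrow> real (lcs_len (map (\<lambda>j. w ! (j - 1)) \<pi>) (drop k w)) < 0.65 * k"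
    for \<pi> w :: "nat list"
  have P_iff: "P \<pi> (W \<omega>) \<longleftrightarrow>
      real (lcs_len (map (\<lambda>j. V j \<omega>) \<pi>) (map (\<lambda>i. Y i \<omega>) [1..<k + 1])) < 0.65 * k"
    if "\<pi> \<in> permutations_of_set {1..k}" for \<pi> \<omega>
  proof -
    have "map (\<lambda>j. W \<omega> ! (j - 1)) \<pi> = map (\<lambda>j. V j \<omega>) \<pi>"
      using permutations_of_setD(1)[OF that]
      by (intro map_cong) (auto simp: W_def nth_append simp del: upt_Suc)
    moreover have "drop k (W \<omega>) = map (\<lambda>i. Y i \<omega>) [1..<k + 1]"
      by (simp add: W_def del: upt_Suc)
    ultimately show ?thesis
      unfolding P_def by (simp only:)
  qed
  have "prob {\<omega> \<in> space M. P (bitdrop id (\<lambda>j. T j \<omega>) k) (W \<omega>)} \<le> exp (- real k / 120000)"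
  proof (rule prob_indep_var_mixture_le[where P = P, OF _ finite_permutations_of_set])
    show "indep_var (count_space UNIV) (\<lambda>\<omega>. bitdrop id (\<lambda>j. T j \<omega>) k) (count_space UNIV) W"
      unfolding W_def[abs_def] by (rule indep_var_bitdrop_id[OF indep])
  next
    fix \<pi> assume \<pi>: "\<pi> \<in> permutations_of_set {1..k}"
    define X :: "nat + nat + nat \<Rightarrow> 'a \<Rightarrow> nat" where
      "X j = (case j of Inl k \<Rightarrow> V k | Inr (Inl k) \<Rightarrow> T k | Inr (Inr i) \<Rightarrow> Y i)" for j
    have "prob {\<omega> \<in> space M. real (lcs_len (map (\<lambda>j. X j \<omega>) (map Inl \<pi>))
        (map (\<lambda>j. X j \<omega>) (map (Inr \<circ> Inr) [1..<k + 1]))) < 0.65 * k} \<le> exp (- real k / 120000)"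
      using indep permutations_of_setD[OF \<pi>] distinct_card[of \<pi>] k unfolding X_def[abs_def]
      by (intro prob_lcs_len_fair_bits_lt) (auto simp: distinct_map inj_on_def distr_V distr_Y)
    then show "prob {\<omega> \<in> space M. P \<pi> (W \<omega>)} \<le> exp (- real k / 120000)"
      unfolding P_iff[OF \<pi>] by (simp add: X_def comp_def)
  qed (rule bitdrop_id_permutations_of_set)
  moreover have "P (bitdrop id (\<lambda>j. T j \<omega>) k) (W \<omega>) \<longleftrightarrow>
      real (lcs_len (bitdrop (\<lambda>j. V j \<omega>) (\<lambda>j. T j \<omega>) k) (map (\<lambda>i. Y i \<omega>) [1..<k + 1])) < 0.65 * k"
    for \<omega>
    unfolding P_iff[OF bitdrop_id_permutations_of_set] bitdrop_map[of "\<lambda>j. V j \<omega>"] ..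
  ultimately show ?thesis by simp
qed

lemma prob_lcs_len_bitdrop_all_ge:
  fixes V T Y :: "nat \<Rightarrow> 'a \<Rightarrow> nat"
  assumes rv_V: "\<And>k. k \<ge> 1 \<Longrightarrow> V k \<in> measurable M (count_space UNIV)"
    and rv_T: "\<And>k. k \<ge> 3 \<Longrightarrow> T k \<in> measurable M (count_space UNIV)"
    and rv_Y: "\<And>i. i \<ge> 1 \<Longrightarrow> Y i \<in> measurable M (count_space UNIV)"
    and distr_V: "\<And>k. k \<ge> 1 \<Longrightarrow>
      distr M (count_space UNIV) (V k) = measure_pmf (pmf_of_set {0, 1})"
    and distr_Y: "\<And>i. i \<ge> 1 \<Longrightarrow>
      distr M (count_space UNIV) (Y i) = measure_pmf (pmf_of_set {0, 1})"
    and indep: "indep_vars (\<lambda>_. count_space UNIV)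
      (\<lambda>j. case j of Inl k \<Rightarrow> V k | Inr (Inl k) \<Rightarrow> T k | Inr (Inr i) \<Rightarrow> Y i)
      (Inl ` {1..} \<union> Inr ` Inl ` {3..} \<union> Inr ` Inr ` {1..})"
    and n: "889 \<le> n"
  shows "1 - (real n + 1) * exp (- (0.45 * real n) / 120000) \<le> prob {\<omega> \<in> space M.
    \<forall>k \<in> {nat \<lceil>0.45 * real n\<rceil>..n}. 0.65 * real k \<le>
      real (lcs_len (bitdrop (\<lambda>j. V j \<omega>) (\<lambda>j. T j \<omega>) k) (map (\<lambda>i. Y i \<omega>) [1..<n + 1]))}"
proof -
  define K where "K = {nat \<lceil>0.45 * real n\<rceil>..n}"
  define \<beta> where "\<beta> = exp (- (0.45 * real n) / 120000)"
  define L where "L k m \<omega> = real (lcs_len (bitdrop (\<lambda>j. V j \<omega>) (\<lambda>j. T j \<omega>) k)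
    (map (\<lambda>i. Y i \<omega>) [1..<m + 1]))" for k m \<omega>
  have [measurable]: "(\<lambda>\<omega>. bitdrop (\<lambda>j. V j \<omega>) (\<lambda>j. T j \<omega>) k) \<in> measurable M (count_space UNIV)"
    "(\<lambda>\<omega>. map (\<lambda>i. Y i \<omega>) [1..<m + 1]) \<in> measurable M (count_space UNIV)" for k m
    using rv_V rv_T rv_Y by (auto intro!: measurable_bitdrop measurable_map_list simp del: upt_Suc)
  have [measurable]: "L k m \<in> borel_measurable M" for k m
    unfolding L_def[abs_def] by measurable
  have "prob {\<omega> \<in> space M. \<not> 0.65 * real k \<le> L k n \<omega>} \<le> \<beta>" if "k \<in> K" for k
  proof -
    have "0.45 * real n \<le> k" "k \<le> n"
      using that by (auto simp: K_def)
    have "L k k \<omega> \<le> L k n \<omega>" for \<omega>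
      unfolding L_def using lcs_len_map_upt_mono[OF \<open>k \<le> n\<close>] by (simp only: of_nat_le_iff)
    then have "prob {\<omega> \<in> space M. L k n \<omega> < 0.65 * k} \<le> prob {\<omega> \<in> space M. L k k \<omega> < 0.65 * k}"
      by (intro prob_less_mono) simp_all
    also have "\<dots> \<le> exp (- real k / 120000)"
      unfolding L_def using \<open>0.45 * real n \<le> k\<close> n
      by (intro prob_lcs_len_bitdrop_lt[OF distr_V distr_Y indep]) auto
    also have "\<dots> \<le> \<beta>"
      using \<open>0.45 * real n \<le> k\<close> by (simp add: \<beta>_def)
    finally show ?thesis by (simp add: not_le)
  qed
  then have "1 - card K * \<beta> \<le> prob {\<omega> \<in> space M. \<forall>k\<in>K. 0.65 * real k \<le> L k n \<omega>}"
    by (intro prob_Ball_ge) (simp_all add: K_def)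
  moreover have "card K * \<beta> \<le> (real n + 1) * \<beta>"
    unfolding K_def \<beta>_def by (intro mult_right_mono) auto
  ultimately show ?thesis
    unfolding K_def L_def \<beta>_def by linarith
qed

end

theorem lemma8:
  fixes M :: "'a measure"
    and V :: "nat \<Rightarrow> 'a \<Rightarrow> nat"
    and T :: "nat \<Rightarrow> 'a \<Rightarrow> nat"
    and Y :: "nat \<Rightarrow> 'a \<Rightarrow> nat"
  assumes "prob_space M"
    and rv_V: "\<And>k. k \<ge> 1 \<Longrightarrow> V k \<in> measurable M (count_space UNIV)"
    and rv_T: "\<And>k. k \<ge> 3 \<Longrightarrow> T k \<in> measurable M (count_space UNIV)"
    and rv_Y: "\<And>i. i \<ge> 1 \<Longrightarrow> Y i \<in> measurable M (count_space UNIV)"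
    and distr_V: "\<And>k. k \<ge> 1 \<Longrightarrow>
        distr M (count_space UNIV) (V k) = measure_pmf (pmf_of_set {0, 1})"
    and distr_T: "\<And>k. k \<ge> 3 \<Longrightarrow>
        distr M (count_space UNIV) (T k) = measure_pmf (pmf_of_set {2..k - 1})"
    and distr_Y: "\<And>i. i \<ge> 1 \<Longrightarrow>
        distr M (count_space UNIV) (Y i) = measure_pmf (pmf_of_set {0, 1})"
    and indep: "prob_space.indep_vars M (\<lambda>_. count_space UNIV)
        (\<lambda>j. case j of Inl k \<Rightarrow> V k | Inr (Inl k) \<Rightarrow> T k | Inr (Inr i) \<Rightarrow> Y i)
        (Inl ` {1..} \<union> Inr ` Inl ` {3..} \<union> Inr ` Inr ` {1..})"
  shows "(\<lambda>n. measure M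
            {\<omega> \<in> space M. \<forall>k \<in> {nat \<lceil>0.45 * real n\<rceil>..n}.
               real (lcs_len (bitdrop (\<lambda>j. V j \<omega>) (\<lambda>j. T j \<omega>) k)
                             (map (\<lambda>i. Y i \<omega>) [1..<n + 1]))
               \<ge> 0.65 * real k})
         \<longlonglongrightarrow> 1"
proof (rule tendsto_sandwich[OF _ _ _ tendsto_const])
  interpret prob_space M by fact
  show "\<forall>\<^sub>F n in sequentially. 1 - (real n + 1) * exp (- (0.45 * real n) / 120000) \<le> prob {\<omega> \<in> space M.
    \<forall>k \<in> {nat \<lceil>0.45 * real n\<rceil>..n}. 0.65 * real k \<le>
      real (lcs_len (bitdrop (\<lambda>j. V j \<omega>) (\<lambda>j. T j \<omega>) k) (map (\<lambda>i. Y i \<omega>) [1..<n + 1]))}"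
    using prob_lcs_len_bitdrop_all_ge[OF rv_V rv_T rv_Y distr_V distr_Y indep]
    unfolding eventually_sequentially by blast
  show "(\<lambda>n. 1 - (real n + 1) * exp (- (0.45 * real n) / 120000)) \<longlonglongrightarrow> 1"
    by real_asymp
qed (intro always_eventually allI prob_space.prob_le_1 \<open>prob_space M\<close>)

end
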